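(* Let $p,q$ be positive integers with $p+q$ odd. For every $n\ge1$, $|\mathcal{J}^{p,q}_n|=2^{\lceil (2^n+3n)/6\rceil}$; equivalently $|\mathcal{J}^{p,q}_n|=2^{g(n)}$ with $g(n)=\frac{2^n+3n+1}{6}$ for odd $n$ and $g(n)=\frac{2^n+3n+2}{6}$ for even $n$.
   Context: Let $p,q$ be positive integers with $p+q$ odd. $\mathbb{Z}_{2^k}$ denotes the integers modulo $2^k$ ($\mathbb{Z}_1$ trivial); as $p+q$ is odd, division by $p+q$ and $(p+q)^2$ is well defined in $\mathbb{Z}_{2^k}$. For $m\ge1$, $D_{2m}$ is the dihedral group of order $2m$, realized as pairs $(f,x)$, $f\in\mathbb{Z}_2$, $x\in\mathbb{Z}_m$, with product $(f_1,x_1)(f_2,x_2)=(f_1+f_2,x_1+(-1)^{f_1}x_2)$. Define $\Phi:D_{2m}\to D_{2m}$, $\Phi((f,x))=(f,\delta(f=1)(p+q)(p-q)-x)$, where $\delta(f=1)$ is $1$ if $f=1$ and $0$ otherwise. $\mathrm{Aut}(T_1)$ is trivial; for $k\ge1$, $\mathrm{Aut}(T_{k+1})$ is the set of triples $g=(g_f,g_L,g_R)$, $g_f\in\mathbb{Z}_2$, $g_L,g_R\in\mathrm{Aut}(T_k)$, with product $(f,A,B)(g,C,D)=(f+g,AC,BD)$ if $f=0$ and $(f+g,AD,BC)$ if $f=1$; subscripts chain ($g_{LR}=(g_L)_R$, $g_{Lf}=(g_L)_f$). Recursively: $\mathcal{J}_1=\mathrm{Aut}(T_2)$, $\psi_1=0$,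 $\Delta_1(g)=(g_f,0)$; $\mathcal{J}_2=\{g\in\mathrm{Aut}(T_3):g_L=g_R\}$, $\psi_2(g)=\delta(g_{Lf}=1)\in\mathbb{Z}_2$, $\Delta_2(g)=(g_f,\psi_2(g))$; for $n\ge3$, $\mathcal{J}_n=\{g\in\mathrm{Aut}(T_{n+1}):g_L,g_R\in\mathcal{J}_{n-1},\ \Delta_{n-1}(g_L)=\Phi(\Delta_{n-1}(g_R))\}$, with $\psi_n:\mathcal{J}_n\to\mathbb{Z}_{2^{\lfloor n/2\rfloor}}$ given by $\psi_n(g)=(\psi_{n-1}(g_L)+\psi_{n-1}(g_R))/(p+q)$ for odd $n$ and $\psi_n(g)=\big(2(\psi_{n-2}(g_{LL})+\psi_{n-2}(g_{RL}))-\delta(g_{Lf}=1)(p+q)(p-q)\big)/(p+q)^2$ for even $n$ (with $2\psi_{n-2}(\cdot)$ read in $\mathbb{Z}_{2^{n/2}}$), and $\Delta_n:\mathcal{J}_n\to D_{2^{\lfloor n/2\rfloor+1}}$ given by $\Delta_n(g)=(g_f,\psi_{n-1}(g_L)-\psi_{n-1}(g_R))$ for odd $n$ and $\Delta_n(g)=(g_f,(p+q)\psi_n(g)-2\psi_{n-1}(g_R))$ for even $n$. *)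

theory Defs
  imports Complex_Main "HOL-Number_Theory.Cong"
begin

text \<open>Elements of Aut(T_k): binary trees; a node carries the flip bit g_f
  (True = 1 in Z_2) and the two subautomorphisms g_L, g_R.\<close>
datatype aut = Lf | Nd bool aut aut

fun aF :: "aut \<Rightarrow> bool" where
  "aF Lf = False" | "aF (Nd f a b) = f"
fun aL :: "aut \<Rightarrow> aut" where
  "aL Lf = Lf" | "aL (Nd f a b) = a"
fun aR :: "aut \<Rightarrow> aut" where
  "aR Lf = Lf" | "aR (Nd f a b) = b"

text \<open>autT k = Aut(T_k) for k \<ge> 1 (autT 0 is unused).\<close>
fun autT :: "nat \<Rightarrow> aut set" where
  "autT 0 = {}"
| "autT (Suc 0) = {Lf}"
| "autT (Suc (Suc k)) =
     {Nd f a b | f a b. a \<in> autT (Suc k) \<and> b \<in> autT (Suc k)}"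

text \<open>Division by a unit a in Z_M, elements represented by 0..M-1.\<close>
definition divm :: "int \<Rightarrow> int \<Rightarrow> int \<Rightarrow> int" where
  "divm M a x = (THE y. 0 \<le> y \<and> y < M \<and> [a * y = x] (mod M))"

text \<open>psi_n with values in Z_{2^{floor(n/2)}}, represented in 0..2^{floor(n/2)}-1.\<close>
fun psi :: "int \<Rightarrow> int \<Rightarrow> nat \<Rightarrow> aut \<Rightarrow> int" where
  "psi p q 0 g = 0"
| "psi p q (Suc 0) g = 0"
| "psi p q (Suc (Suc 0)) g = (if aF (aL g) then 1 else 0)"
| "psi p q (Suc (Suc (Suc k))) g =
     (if odd (k + 3)
      then divm (2 ^ ((k + 3) div 2)) (p + q)
             (psi p q (Suc (Suc k)) (aL g) + psi p q (Suc (Suc k)) (aR g))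
      else divm (2 ^ ((k + 3) div 2)) ((p + q) ^ 2)
             (2 * (psi p q (Suc k) (aL (aL g)) + psi p q (Suc k) (aL (aR g)))
              - (if aF (aL g) then (p + q) * (p - q) else 0)))"

text \<open>Delta_n with values in D_{2^{floor(n/2)+1}} = Z_2 x Z_{2^{floor(n/2)}}.\<close>
fun Delta :: "int \<Rightarrow> int \<Rightarrow> nat \<Rightarrow> aut \<Rightarrow> bool \<times> int" where
  "Delta p q 0 g = (aF g, 0)"
| "Delta p q (Suc 0) g = (aF g, 0)"
| "Delta p q (Suc (Suc 0)) g = (aF g, psi p q 2 g)"
| "Delta p q (Suc (Suc (Suc k))) g =
     (if odd (k + 3)
      then (aF g, (psi p q (k + 2) (aL g) - psi p q (k + 2) (aR g)) mod 2 ^ ((k + 3) div 2))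
      else (aF g, ((p + q) * psi p q (k + 3) g - 2 * psi p q (k + 2) (aR g))
                    mod 2 ^ ((k + 3) div 2)))"

definition Phi :: "int \<Rightarrow> int \<Rightarrow> int \<Rightarrow> bool \<times> int \<Rightarrow> bool \<times> int" where
  "Phi p q m d = (fst d, ((if fst d then (p + q) * (p - q) else 0) - snd d) mod m)"

fun J :: "int \<Rightarrow> int \<Rightarrow> nat \<Rightarrow> aut set" where
  "J p q 0 = {}"
| "J p q (Suc 0) = autT 2"
| "J p q (Suc (Suc 0)) = {g \<in> autT 3. aL g = aR g}"
| "J p q (Suc (Suc (Suc k))) =
     {g \<in> autT (k + 4). aL g \<in> J p q (k + 2) \<and> aR g \<in> J p q (k + 2) \<and>
        Delta p q (k + 2) (aL g) = Phi p q (2 ^ ((k + 2) div 2)) (Delta p q (k + 2) (aR g))}"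

end

theory Submission
  imports Defs
begin

text \<open>For g in J_n consider its summary (g_f, psi_n(g), psi_(n-1)(g_R)), an element of
  Z_2 x Z_(2^floor(n/2)) x Z_(2^floor((n-1)/2)), a set with 2^n elements. Both psi_(n+1) and
  the Delta_n-condition defining J_(n+1) depend only on the summaries of the two children, so
  the elements of J_(n+1) with a prescribed summary correspond to pairs of children whose
  summaries solve a system of linear congruences. Whatever the target, this system has exactly
  2^floor((n-1)/2) solutions: the last coordinate of the left summary is free and determines
  everything else. By induction all fibres of the summary map on J_n have the same size
  2^e(n), with e(2) = 0 and e(n+1) = 2 e(n) + floor((n-1)/2); hence |J_n| = 2^(n + e(n)), and
  solving the recursion gives the exponent.\<close>

lemma card_eq_mult_card_if_fibres:
  assumes "finite A" "finite B" "T ` A \<subseteq> B"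
    and "\<And>t. t \<in> B \<Longrightarrow> card {a \<in> A. T a = t} = c"
  shows "card A = c * card B"
proof -
  have "A = (\<Union>t\<in>B. {a \<in> A. T a = t})" using assms(3) by auto
  moreover have "card (\<Union>t\<in>B. {a \<in> A. T a = t}) = (\<Sum>t\<in>B. card {a \<in> A. T a = t})"
    using assms(1,2) by (intro card_UN_disjoint) auto
  ultimately show ?thesis using assms(4) by simp
qed

lemma card_pairs_if_fibres:
  assumes "finite A" "finite B" "T ` A \<subseteq> B"
    and "\<And>t. t \<in> B \<Longrightarrow> card {a \<in> A. T a = t} = c"
  shows "card {(a, b) \<in> A \<times> A. R (T a) (T b)} = c * c * card {(u, v) \<in> B \<times> B. R u v}"
proof (rule card_eq_mult_card_if_fibres[where T = "map_prod T T"])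
  fix w assume "w \<in> {(u, v) \<in> B \<times> B. R u v}"
  then obtain u v where "w = (u, v)" "u \<in> B" "v \<in> B" "R u v" by auto
  then have "{ab \<in> {(a, b) \<in> A \<times> A. R (T a) (T b)}. map_prod T T ab = w}
      = {a \<in> A. T a = u} \<times> {b \<in> A. T b = v}" by auto
  then show "card {ab \<in> {(a, b) \<in> A \<times> A. R (T a) (T b)}. map_prod T T ab = w} = c * c"
    using assms(4) \<open>u \<in> B\<close> \<open>v \<in> B\<close> by (simp add: card_cartesian_product)
qed (use assms(1-3) in \<open>auto intro: finite_subset[of _ "A \<times> A"] finite_subset[of _ "B \<times> B"]\<close>)

lemma eq_mod_iff_dvd:
  fixes a b m :: int
  assumes "0 \<le> a" "a < m"
  shows "a = b mod m \<longleftrightarrow> m dvd (b - a)"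
  using assms by (metis mod_eq_dvd_iff mod_pos_pos_trivial)

text \<open>The system compatible, for even and for odd n, with s = p + q and sigma = (p+q)(p-q):
  parity forces the flip bit, and xa, yb are then determined modulo the relevant power of 2
  by x, y and the free coordinate ya.\<close>
lemma even_case_congruences_iff:
  fixes s \<sigma> c x y xa ya yb K :: int
  assumes "odd s" "odd \<sigma>" and c: "2 * c = s^2 * x - (if odd x then \<sigma> else 0)"
  shows "(2 * K) dvd (s * xa - 2 * ya - ((if f then \<sigma> else 0) - (s * y - 2 * yb)))
      \<and> (2 * K) dvd (s * x - (xa + y))
    \<longleftrightarrow> f = odd x \<and> (2 * K) dvd (s * x - y - xa) \<and> K dvd (c - ya - yb)"
    (is "(2 * K) dvd ?A \<and> _ \<longleftrightarrow> _")
proof -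
  define u where "u = s * x - y - xa"
  define v where "v = c - ya - yb"
  have u: "s * x - (xa + y) = u" unfolding u_def by simp
  have sum: "?A + s * u = s^2 * x - (if f then \<sigma> else 0) - 2 * (ya + yb)"
    unfolding u_def by (simp add: algebra_simps power2_eq_square)
  show ?thesis
  proof (cases "f = odd x")
    case True
    then have A: "?A = 2 * v - s * u" using sum c unfolding v_def by (simp add: algebra_simps)
    have "(2 * K) dvd ?A \<longleftrightarrow> (2 * K) dvd (2 * v)" if "(2 * K) dvd u"
      unfolding A using dvd_mult[OF that, of s] by (rule dvd_diff_left_iff)
    moreover have "(2 * K) dvd (2 * v) \<longleftrightarrow> K dvd v" by (subst dvd_mult_cancel_left) simp
    ultimately show ?thesis using True unfolding u u_def[symmetric] v_def[symmetric] by blast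
  next
    case False
    then have "odd (?A + s * u)" unfolding sum using assms(1,2) by auto
    then have "\<not> (2 * K) dvd (?A + s * u)" by (meson dvd_mult_left)
    then show ?thesis using False unfolding u by (meson dvd_add dvd_mult)
  qed
qed

lemma odd_case_congruences_iff:
  fixes s \<sigma> c x y xa ya yb M :: int
  assumes "odd s" "odd \<sigma>" "coprime s M" and c: "2 * c = s^2 * x - (if odd x then \<sigma> else 0)"
  shows "M dvd (s * xa - 2 * ya - ((if f then \<sigma> else 0) - (s * y - 2 * yb)))
      \<and> (2 * M) dvd (s^2 * x - (2 * (s * xa - ya + (s * y - yb)) - (if f then \<sigma> else 0)))
    \<longleftrightarrow> f = odd x \<and> M dvd (s * x - y - xa) \<and> M dvd (c - ya - yb)"
    (is "M dvd ?A \<and> (2 * M) dvd ?B \<longleftrightarrow> _")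
proof -
  define u where "u = s * x - y - xa"
  define v where "v = c - ya - yb"
  show ?thesis
  proof (cases "f = odd x")
    case True
    then have A: "?A = v - (s * u - v)" and B: "?B = 2 * (s * u - v)"
      using c unfolding u_def v_def by (simp_all add: algebra_simps power2_eq_square)
    have "(2 * M) dvd ?B \<longleftrightarrow> M dvd (s * u - v)" unfolding B by (subst dvd_mult_cancel_left) simp
    moreover have "M dvd ?A \<longleftrightarrow> M dvd v" if "M dvd (s * u - v)"
      unfolding A using that by (rule dvd_diff_left_iff)
    moreover have "M dvd (s * u - v) \<longleftrightarrow> M dvd (s * u)" if "M dvd v"
      using that by (rule dvd_diff_left_iff)
    moreover have "M dvd (s * u) \<longleftrightarrow> M dvd u"
      using assms(3) by (simp add: coprime_commute coprime_dvd_mult_right_iff)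
    ultimately show ?thesis using True unfolding u_def[symmetric] v_def[symmetric] by blast
  next
    case False
    then have "odd ?B" using assms(1,2) by auto
    then show ?thesis using False by (meson dvd_mult_left)
  qed
qed

lemma divm_ex1:
  fixes a M x :: int
  assumes cop: "coprime a M" and "M > 0"
  shows "\<exists>!y. 0 \<le> y \<and> y < M \<and> [a * y = x] (mod M)"
proof -
  obtain z where z: "[a * z = x] (mod M)"
    using cong_solve_dvd_int[of a M x] cop by auto
  have "[a * (z mod M) = a * z] (mod M)"
    by (simp add: cong_def mod_mult_right_eq)
  then have "[a * (z mod M) = x] (mod M)" using z cong_trans by blast
  moreover have "y' = y" if "0 \<le> y" "y < M" "[a * y = x] (mod M)"
      "0 \<le> y'" "y' < M" "[a * y' = x] (mod M)" for y y'
  proof -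
    have "[a * y' = a * y] (mod M)" using that by (metis cong_sym cong_trans)
    then show ?thesis using cong_mult_lcancel[OF cop] cong_less_imp_eq_int that by blast
  qed
  ultimately show ?thesis using \<open>M > 0\<close> by (metis pos_mod_bound pos_mod_sign)
qed

lemma divm_spec:
  fixes a M x :: int
  assumes "coprime a M" "M > 0"
  shows "0 \<le> divm M a x \<and> divm M a x < M \<and> [a * divm M a x = x] (mod M)"
  unfolding divm_def using theI'[OF divm_ex1[OF assms]] .

lemma divm_eq_iff:
  fixes a M x y :: int
  assumes "coprime a M" "0 \<le> y" "y < M"
  shows "divm M a x = y \<longleftrightarrow> M dvd (a * y - x)"
proof -
  have "M > 0" using assms(2,3) by linarith
  then show ?thesis
    using divm_ex1[OF assms(1)] divm_spec[OF assms(1)] assms(2,3)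
    by (metis cong_iff_dvd_diff)
qed

lemma divm_cong:
  fixes M a x x' :: int
  assumes "M dvd (x - x')"
  shows "divm M a x = divm M a x'"
proof -
  have "[x = x'] (mod M)" using assms by (simp add: cong_iff_dvd_diff)
  then have "[a * y = x] (mod M) \<longleftrightarrow> [a * y = x'] (mod M)" for y
    by (metis cong_sym cong_trans)
  then show ?thesis unfolding divm_def by simp
qed

lemma psi_odd_eq:
  assumes "n \<ge> 3" "odd n"
  shows "psi p q n g = divm (2^(n div 2)) (p+q) (psi p q (n-1) (aL g) + psi p q (n-1) (aR g))"
proof -
  obtain k where k: "n = Suc (Suc (Suc k))" using assms(1)
    by (metis add.commute add_Suc le_Suc_ex numeral_3_eq_3)
  have e: "Suc (Suc (Suc k)) = n" "k + 3 = n" "Suc (Suc k) = n - 1" using k by auto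
  show ?thesis using psi.simps(4)[of p q k g, unfolded e] assms(2) by simp
qed

lemma psi_even_eq:
  assumes "n \<ge> 3" "even n"
  shows "psi p q n g = divm (2^(n div 2)) ((p+q)^2)
     (2 * (psi p q (n-2) (aL (aL g)) + psi p q (n-2) (aL (aR g)))
      - (if aF (aL g) then (p + q) * (p - q) else 0))"
proof -
  obtain k where k: "n = Suc (Suc (Suc k))" using assms(1)
    by (metis add.commute add_Suc le_Suc_ex numeral_3_eq_3)
  have e: "Suc (Suc (Suc k)) = n" "k + 3 = n" "Suc (Suc k) = n - 1" "Suc k = n - 2" using k by auto
  show ?thesis using psi.simps(4)[of p q k g, unfolded e(1), unfolded e(2-4)] assms(2) by simp
qed

lemma Delta_ge3_eq:
  assumes "n \<ge> 3"
  shows "Delta p q n g = (if odd n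
      then (aF g, (psi p q (n-1) (aL g) - psi p q (n-1) (aR g)) mod 2 ^ (n div 2))
      else (aF g, ((p + q) * psi p q n g - 2 * psi p q (n-1) (aR g)) mod 2 ^ (n div 2)))"
proof -
  obtain k where k: "n = Suc (Suc (Suc k))" using assms(1)
    by (metis add.commute add_Suc le_Suc_ex numeral_3_eq_3)
  have e: "Suc (Suc (Suc k)) = n" "k + 3 = n" "k + 2 = n - 1" using k by auto
  show ?thesis using Delta.simps(4)[of p q k g, unfolded e] by simp
qed

lemma J_Suc_eq:
  assumes "n \<ge> 2"
  shows "J p q (Suc n) = {g \<in> autT (Suc (Suc n)). aL g \<in> J p q n \<and> aR g \<in> J p q n \<and>
        Delta p q n (aL g) = Phi p q (2 ^ (n div 2)) (Delta p q n (aR g))}"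
proof -
  obtain k where k: "n = Suc (Suc k)" using assms by (metis add_2_eq_Suc le_Suc_ex)
  have e: "Suc (Suc (Suc k)) = Suc n" "k + 4 = Suc (Suc n)" "k + 2 = n" using k by auto
  show ?thesis using J.simps(4)[of p q k, unfolded e] by simp
qed

lemma psi_range:
  assumes "odd (p+q)"
  shows "0 \<le> psi p q n g \<and> psi p q n g < 2^(n div 2)"
proof -
  consider "n \<le> 2" | "n \<ge> 3" "odd n" | "n \<ge> 3" "even n" by linarith
  then show ?thesis
  proof cases
    case 1
    then show ?thesis by (auto simp: le_Suc_eq numeral_2_eq_2)
  next
    case 2
    then show ?thesis using divm_spec[of "p+q"] assms psi_odd_eq by simp
  next
    case 3
    then show ?thesis using divm_spec[of "(p+q)^2"] assms psi_even_eq by simp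
  qed
qed

lemma psi_odd_cong:
  assumes "odd (p+q)" "n \<ge> 3" "odd n"
  shows "(2::int)^(n div 2) dvd
           ((p+q) * psi p q n g - (psi p q (n-1) (aL g) + psi p q (n-1) (aR g)))"
  using divm_spec[of "p+q" "2^(n div 2)"] assms psi_odd_eq by (simp add: cong_iff_dvd_diff)

lemma Delta_eq:
  assumes "odd (p+q)" "n \<ge> 2"
  shows "Delta p q n g = (aF g, ((p+q) * psi p q n g - 2 * psi p q (n-1) (aR g)) mod 2^(n div 2))"
proof -
  consider "n = 2" | "n \<ge> 3" "odd n" | "n \<ge> 3" "even n" using assms(2) by linarith
  then show ?thesis
  proof cases
    case 1
    have "psi p q 2 g = 0 \<or> psi p q 2 g = 1" using psi_range[OF assms(1), of 2 g] by auto
    moreover have "(p+q) mod 2 = 1" using assms(1) by presburger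
    ultimately have "((p+q) * psi p q 2 g) mod 2 = psi p q 2 g" by (auto simp: mod_mult_left_eq)
    then show ?thesis using 1 by (simp add: numeral_2_eq_2)
  next
    case 2
    have "[(p+q) * psi p q n g - 2 * psi p q (n-1) (aR g)
         = psi p q (n-1) (aL g) - psi p q (n-1) (aR g)] (mod 2^(n div 2))"
      using psi_odd_cong[OF assms(1) 2, of g]
      by (simp add: cong_iff_dvd_diff diff_diff_eq add.commute)
    then show ?thesis using Delta_ge3_eq[of n] 2 by (simp add: cong_def)
  next
    case 3
    then show ?thesis using Delta_ge3_eq[of n] by simp
  qed
qed

lemma autT_Suc_Suc:
  "autT (Suc (Suc k)) = (\<lambda>(f, a, b). Nd f a b) ` (UNIV \<times> autT (Suc k) \<times> autT (Suc k))"
  by force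

lemma finite_autT: "finite (autT n)"
proof (induction n rule: autT.induct)
  case (3 k)
  then show ?case unfolding autT_Suc_Suc by simp
qed auto

lemma J_subset_autT: "n \<ge> 1 \<Longrightarrow> J p q n \<subseteq> autT (Suc n)"
proof -
  assume "n \<ge> 1"
  then consider "n = 1" | "n = 2" | k where "n = Suc (Suc (Suc k))"
    by (metis One_nat_def Suc_1 Suc_le_D not0_implies_Suc)
  then show ?thesis
    by cases (auto simp: numeral_2_eq_2 numeral_3_eq_3 numeral_eq_Suc simp del: autT.simps)
qed

lemma finite_J: "finite (J p q n)"
  by (cases "n = 0") (auto intro: finite_subset[OF J_subset_autT finite_autT])

definition summary :: "int \<Rightarrow> int \<Rightarrow> nat \<Rightarrow> aut \<Rightarrow> bool \<times> int \<times> int" where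
  "summary p q n g = (aF g, psi p q n g, psi p q (n - 1) (aR g))"

definition summary_space :: "nat \<Rightarrow> (bool \<times> int \<times> int) set" where
  "summary_space n = UNIV \<times> {0..<2 ^ (n div 2)} \<times> {0..<2 ^ ((n - 1) div 2)}"

lemma finite_summary_space: "finite (summary_space n)"
  by (simp add: summary_space_def)

lemma card_summary_space: "n \<ge> 1 \<Longrightarrow> card (summary_space n) = 2 ^ n"
proof -
  assume n: "n \<ge> 1"
  have "card (summary_space n) = 2 * (2 ^ (n div 2) * 2 ^ ((n - 1) div 2))"
    by (simp add: summary_space_def card_cartesian_product nat_power_eq)
  also have "\<dots> = 2 ^ Suc (n div 2 + (n - 1) div 2)" by (simp add: power_add)
  also have "Suc (n div 2 + (n - 1) div 2) = n" using n by presburger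
  finally show ?thesis .
qed

lemma summary_in_summary_space: "odd (p+q) \<Longrightarrow> summary p q n g \<in> summary_space n"
  using psi_range by (simp add: summary_def summary_space_def)

text \<open>The Delta_n-condition of J_(n+1) and the congruence defining psi_(n+1) (with value x),
  rewritten in terms of the summaries of the children; see compatible_summary_iff.\<close>
fun compatible ::
  "int \<Rightarrow> int \<Rightarrow> nat \<Rightarrow> int \<Rightarrow> int \<Rightarrow> bool \<times> int \<times> int \<Rightarrow> bool \<times> int \<times> int \<Rightarrow> bool"
  where "compatible p q n x y (fa, xa, ya) (fb, xb, yb) \<longleftrightarrow>
    fb = fa \<and> xb = y \<and>
    2 ^ (n div 2) dvd
      ((p+q) * xa - 2 * ya - ((if fa then (p+q) * (p-q) else 0) - ((p+q) * xb - 2 * yb))) \<and>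
    (if even n then 2 ^ (Suc n div 2) dvd ((p+q) * x - (xa + xb))
     else 2 ^ (Suc n div 2) dvd
       ((p+q)^2 * x - (2 * ((p+q) * xa - ya + ((p+q) * xb - yb)) - (if fa then (p+q) * (p-q) else 0))))"

lemma Delta_Phi_iff:
  assumes "odd (p+q)" "n \<ge> 2"
  shows "Delta p q n a = Phi p q (2 ^ (n div 2)) (Delta p q n b) \<longleftrightarrow> aF b = aF a \<and>
    2 ^ (n div 2) dvd ((p+q) * psi p q n a - 2 * psi p q (n-1) (aR a)
      - ((if aF a then (p+q) * (p-q) else 0) - ((p+q) * psi p q n b - 2 * psi p q (n-1) (aR b))))"
  by (auto simp: Delta_eq[OF assms] Phi_def mod_diff_right_eq mod_eq_dvd_iff)

lemma psi_Suc_Nd_eq_iff: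
  assumes odd: "odd (p+q)" and n: "n \<ge> 2" and x: "0 \<le> x" "x < 2 ^ (Suc n div 2)"
  shows "psi p q (Suc n) (Nd f a b) = x \<longleftrightarrow>
    (if even n then 2 ^ (Suc n div 2) dvd ((p+q) * x - (psi p q n a + psi p q n b))
     else 2 ^ (Suc n div 2) dvd ((p+q)^2 * x - (2 * ((p+q) * psi p q n a - psi p q (n-1) (aR a)
       + ((p+q) * psi p q n b - psi p q (n-1) (aR b))) - (if aF a then (p+q) * (p-q) else 0))))"
proof (cases "even n")
  case True
  then have "psi p q (Suc n) (Nd f a b)
      = divm (2 ^ (Suc n div 2)) (p+q) (psi p q n a + psi p q n b)"
    using psi_odd_eq[of "Suc n"] n by simp
  moreover have "coprime (p+q) (2 ^ (Suc n div 2))" using odd by simp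
  ultimately show ?thesis using True divm_eq_iff[of "p+q" "2 ^ (Suc n div 2)" x] x by simp
next
  case False
  then have n3: "n \<ge> 3" and half: "Suc n div 2 = Suc (n div 2)" using n by presburger+
  txt \<open>psi_(n+1) refers to the grandchildren a_L, b_L; the congruences defining psi_n(a) and
    psi_n(b) replace them by summary data, at the cost of a factor 2 that the doubled modulus
    absorbs.\<close>
  let ?\<sigma> = "if aF a then (p+q) * (p-q) else 0"
  let ?e = "\<lambda>c. (p+q) * psi p q n c - (psi p q (n-1) (aL c) + psi p q (n-1) (aR c))"
  let ?old = "2 * (psi p q (n-1) (aL a) + psi p q (n-1) (aL b)) - ?\<sigma>"
  let ?new = "2 * ((p+q) * psi p q n a - psi p q (n-1) (aR a)
                + ((p+q) * psi p q n b - psi p q (n-1) (aR b))) - ?\<sigma>"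
  have "2 ^ (n div 2) dvd ?e a + ?e b"
    using psi_odd_cong[OF odd n3 False] by (intro dvd_add)
  then have "2 ^ (Suc n div 2) dvd 2 * (?e a + ?e b)"
    unfolding half power_Suc by (rule mult_dvd_mono[OF dvd_refl])
  also have "2 * (?e a + ?e b) = ?new - ?old" by (simp add: algebra_simps)
  finally have
    "divm (2 ^ (Suc n div 2)) ((p+q)^2) ?new = divm (2 ^ (Suc n div 2)) ((p+q)^2) ?old"
    by (rule divm_cong)
  moreover have "psi p q (Suc n) (Nd f a b) = divm (2 ^ (Suc n div 2)) ((p+q)^2) ?old"
    using psi_even_eq[of "Suc n" p q "Nd f a b"] n3 False by simp
  ultimately have "psi p q (Suc n) (Nd f a b) = divm (2 ^ (Suc n div 2)) ((p+q)^2) ?new"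
    by simp
  moreover have "coprime ((p+q)^2) (2 ^ (Suc n div 2))" using odd by simp
  ultimately show ?thesis
    using False divm_eq_iff[of "(p+q)^2" "2 ^ (Suc n div 2)" x ?new] x by simp
qed

lemma compatible_summary_iff:
  assumes "odd (p+q)" "n \<ge> 2" "0 \<le> x" "x < 2 ^ (Suc n div 2)"
  shows "compatible p q n x y (summary p q n a) (summary p q n b) \<longleftrightarrow>
    Delta p q n a = Phi p q (2 ^ (n div 2)) (Delta p q n b) \<and>
    summary p q (Suc n) (Nd f a b) = (f, x, y)"
  by (auto simp: summary_def Delta_Phi_iff[OF assms(1,2)] psi_Suc_Nd_eq_iff[OF assms])

lemma J_Suc_fibre:
  assumes odd: "odd (p+q)" and n: "n \<ge> 2" and x: "0 \<le> x" "x < 2 ^ (Suc n div 2)"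
  shows "{g \<in> J p q (Suc n). summary p q (Suc n) g = (f, x, y)} =
    (\<lambda>(a, b). Nd f a b) ` {(a, b) \<in> J p q n \<times> J p q n.
       compatible p q n x y (summary p q n a) (summary p q n b)}"
proof (intro set_eqI iffI)
  fix g assume g: "g \<in> {g \<in> J p q (Suc n). summary p q (Suc n) g = (f, x, y)}"
  then obtain f' a b where "g = Nd f' a b" using J_Suc_eq[OF n] by auto
  moreover have "f' = f" using g unfolding \<open>g = Nd f' a b\<close> by (simp add: summary_def)
  ultimately show "g \<in> (\<lambda>(a, b). Nd f a b) ` {(a, b) \<in> J p q n \<times> J p q n.
       compatible p q n x y (summary p q n a) (summary p q n b)}"
    using g J_Suc_eq[OF n] compatible_summary_iff[OF odd n x, of y a b f] by auto
next
  fix g assume "g \<in> (\<lambda>(a, b). Nd f a b) ` {(a, b) \<in> J p q n \<times> J p q n.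
       compatible p q n x y (summary p q n a) (summary p q n b)}"
  then obtain a b where "g = Nd f a b" "a \<in> J p q n" "b \<in> J p q n"
    "compatible p q n x y (summary p q n a) (summary p q n b)" by auto
  then show "g \<in> {g \<in> J p q (Suc n). summary p q (Suc n) g = (f, x, y)}"
    using J_subset_autT[of n p q] n J_Suc_eq[OF n] compatible_summary_iff[OF odd n x, of y a b f]
    by auto
qed

lemma compatible_iff_explicit:
  fixes p q x y :: int
  assumes odd: "odd (p+q)" and n: "n \<ge> 2"
    and u: "(fa, xa, ya) \<in> summary_space n" and v: "(fb, xb, yb) \<in> summary_space n"
    and c: "2 * c = (p+q)^2 * x - (if odd x then (p+q) * (p-q) else 0)"
  shows "compatible p q n x y (fa, xa, ya) (fb, xb, yb) \<longleftrightarrow>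
    fa = odd x \<and> fb = odd x \<and> xa = ((p+q) * x - y) mod 2 ^ (n div 2) \<and> xb = y
    \<and> yb = (c - ya) mod 2 ^ ((n - 1) div 2)"
proof -
  have xa: "xa = ((p+q) * x - y) mod 2 ^ (n div 2) \<longleftrightarrow> 2 ^ (n div 2) dvd ((p+q) * x - y - xa)"
    using u by (intro eq_mod_iff_dvd) (auto simp: summary_space_def)
  have yb: "yb = (c - ya) mod 2 ^ ((n - 1) div 2) \<longleftrightarrow> 2 ^ ((n - 1) div 2) dvd (c - ya - yb)"
    using v by (intro eq_mod_iff_dvd) (auto simp: summary_space_def diff_diff_eq)
  have sigma: "odd ((p+q) * (p-q))" using odd by simp
  show ?thesis
  proof (cases "even n")
    case True
    then have "n div 2 = Suc ((n - 1) div 2)" "Suc n div 2 = Suc ((n - 1) div 2)"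
      using n by presburger+
    then show ?thesis
      using even_case_congruences_iff[OF odd sigma c, of "2 ^ ((n - 1) div 2)"] True
      unfolding xa yb by auto
  next
    case False
    then have "(n - 1) div 2 = n div 2" "Suc n div 2 = Suc (n div 2)" using n by presburger+
    moreover have "coprime (p+q) (2 ^ (n div 2))" using odd by simp
    ultimately show ?thesis
      using odd_case_congruences_iff[OF odd sigma _ c, of "2 ^ (n div 2)"] False
      unfolding xa yb by auto
  qed
qed

lemma card_compatible:
  fixes p q x y :: int
  assumes odd: "odd (p+q)" and n: "n \<ge> 2"
    and x: "0 \<le> x" "x < 2 ^ (Suc n div 2)" and y: "0 \<le> y" "y < 2 ^ (n div 2)"
  shows "card {(u, v) \<in> summary_space n \<times> summary_space n. compatible p q n x y u v}
    = 2 ^ ((n - 1) div 2)"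
proof -
  define c where "c = ((p+q)^2 * x - (if odd x then (p+q) * (p-q) else 0)) div 2"
  have c: "2 * c = (p+q)^2 * x - (if odd x then (p+q) * (p-q) else 0)"
    using odd unfolding c_def by auto
  define sol where "sol ya = ((odd x, ((p+q) * x - y) mod 2 ^ (n div 2), ya),
    (odd x, y, (c - ya) mod 2 ^ ((n - 1) div 2)))" for ya
  have "{(u, v) \<in> summary_space n \<times> summary_space n. compatible p q n x y u v}
      = sol ` {0..<2 ^ ((n - 1) div 2)}"
  proof (intro set_eqI iffI)
    fix w assume "w \<in> {(u, v) \<in> summary_space n \<times> summary_space n. compatible p q n x y u v}"
    then obtain fa xa ya fb xb yb where w: "w = ((fa, xa, ya), (fb, xb, yb))"
      and u: "(fa, xa, ya) \<in> summary_space n" and v: "(fb, xb, yb) \<in> summary_space n"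
      and "compatible p q n x y (fa, xa, ya) (fb, xb, yb)" by auto
    then have "w = sol ya"
      unfolding w compatible_iff_explicit[OF odd n u v c] by (simp add: sol_def)
    moreover have "ya \<in> {0..<2 ^ ((n - 1) div 2)}" using u by (simp add: summary_space_def)
    ultimately show "w \<in> sol ` {0..<2 ^ ((n - 1) div 2)}" by blast
  next
    fix w assume "w \<in> sol ` {0..<2 ^ ((n - 1) div 2)}"
    then obtain ya where w: "w = sol ya" and ya: "ya \<in> {0..<2 ^ ((n - 1) div 2)}" by blast
    let ?u = "(odd x, ((p+q) * x - y) mod 2 ^ (n div 2), ya)"
    let ?v = "(odd x, y, (c - ya) mod 2 ^ ((n - 1) div 2))"
    have u: "?u \<in> summary_space n" and v: "?v \<in> summary_space n"
      using ya y by (simp_all add: summary_space_def)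
    have "compatible p q n x y ?u ?v"
      by (rule compatible_iff_explicit[OF odd n u v c, THEN iffD2]) simp
    then show "w \<in> {(u, v) \<in> summary_space n \<times> summary_space n. compatible p q n x y u v}"
      using u v by (simp add: w sol_def del: compatible.simps)
  qed
  moreover have "inj sol" by (auto simp: inj_def sol_def)
  ultimately show ?thesis by (simp add: card_image inj_on_subset nat_power_eq)
qed

lemma card_J_2_fibre:
  assumes "t \<in> summary_space 2"
  shows "card {g \<in> J p q 2. summary p q 2 g = t} = 1"
proof -
  obtain f x y where t: "t = (f, x, y)" by (metis prod.exhaust)
  then have "x = 0 \<or> x = 1" "y = 0" using assms by (auto simp: summary_space_def)
  then have "{g \<in> J p q 2. summary p q 2 g = t} = {Nd f (Nd (x = 1) Lf Lf) (Nd (x = 1) Lf Lf)}"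
    unfolding t by (auto simp: summary_def numeral_2_eq_2 numeral_3_eq_3)
  then show ?thesis by simp
qed

fun fibre_exp :: "nat \<Rightarrow> nat" where
  "fibre_exp 0 = 0"
| "fibre_exp (Suc n) = (if n < 2 then 0 else 2 * fibre_exp n + (n - 1) div 2)"

lemma card_J_fibre:
  assumes odd: "odd (p+q)" and "n \<ge> 2" "t \<in> summary_space n"
  shows "card {g \<in> J p q n. summary p q n g = t} = 2 ^ fibre_exp n"
  using assms(2,3)
proof (induction n arbitrary: t rule: nat_induct_at_least)
  case base
  then show ?case using card_J_2_fibre by (simp add: numeral_2_eq_2)
next
  case (Suc n)
  obtain f x y where t: "t = (f, x, y)" by (metis prod.exhaust)
  have x: "0 \<le> x" "x < 2 ^ (Suc n div 2)" and y: "0 \<le> y" "y < 2 ^ (n div 2)"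
    using Suc.prems by (auto simp: t summary_space_def)
  have "card {g \<in> J p q (Suc n). summary p q (Suc n) g = t}
      = card {(a, b) \<in> J p q n \<times> J p q n.
          compatible p q n x y (summary p q n a) (summary p q n b)}"
    unfolding t J_Suc_fibre[OF odd Suc.hyps x] by (rule card_image) (auto simp: inj_on_def)
  also have "\<dots> = 2 ^ fibre_exp n * 2 ^ fibre_exp n
      * card {(u, v) \<in> summary_space n \<times> summary_space n. compatible p q n x y u v}"
    by (rule card_pairs_if_fibres[OF finite_J finite_summary_space])
      (use summary_in_summary_space[OF odd] Suc.IH in auto)
  also have "\<dots> = 2 ^ fibre_exp (Suc n)"
    using card_compatible[OF odd Suc.hyps x y] Suc.hyps by (simp add: power_add[symmetric] mult_2)
  finally show ?case .
qed

lemma card_J_eq: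
  assumes "odd (p+q)" "n \<ge> 2"
  shows "card (J p q n) = 2 ^ (n + fibre_exp n)"
proof -
  have "card (J p q n) = 2 ^ fibre_exp n * card (summary_space n)"
    by (rule card_eq_mult_card_if_fibres[where T = "summary p q n",
          OF finite_J finite_summary_space])
      (use summary_in_summary_space[OF assms(1)] card_J_fibre[OF assms] in auto)
  then show ?thesis using card_summary_space[of n] assms(2) by (simp add: power_add)
qed

lemma fibre_exp_closed_form:
  "n \<ge> 2 \<Longrightarrow> 6 * (n + fibre_exp n) = 2 ^ n + 3 * n + (if odd n then 1 else 2)"
proof (induction n rule: nat_induct_at_least)
  case base
  then show ?case by (simp add: numeral_2_eq_2)
next
  case (Suc n)
  have "6 * (Suc n + fibre_exp (Suc n))
      = 2 * (6 * (n + fibre_exp n)) - 6 * n + 6 + 6 * ((n - 1) div 2)"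
    using Suc.hyps by simp
  also have "\<dots> = 2 ^ Suc n + 3 * Suc n + (if odd (Suc n) then 1 else 2)"
    unfolding Suc.IH using Suc.hyps by (cases "odd n") (simp_all, presburger+)
  finally show ?case .
qed

lemma card_J_1: "card (J p q 1) = 2"
proof -
  have "J p q 1 = {Nd True Lf Lf, Nd False Lf Lf}" by (auto simp: numeral_2_eq_2)
  then show ?thesis by simp
qed

theorem corollary2:
  fixes p q :: int and n :: nat
  assumes "p > 0" and "q > 0" and "odd (p + q)" and "n \<ge> 1"
  shows "card (J p q n) = 2 ^ nat (ceiling ((2 ^ n + 3 * real n) / 6))
       \<and> card (J p q n) = 2 ^ (if odd n then (2 ^ n + 3 * n + 1) div 6
                                       else (2 ^ n + 3 * n + 2) div 6)"
proof -
  obtain G where G: "card (J p q n) = 2 ^ G" "6 * G = 2 ^ n + 3 * n + (if odd n then 1 else 2)"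
  proof (cases "n = 1")
    case True
    then show ?thesis using that[of 1] card_J_1 by simp
  next
    case False
    then show ?thesis
      using that[of "n + fibre_exp n"] assms(3,4) card_J_eq fibre_exp_closed_form by simp
  qed
  then have "(if odd n then (2 ^ n + 3 * n + 1) div 6 else (2 ^ n + 3 * n + 2) div 6) = G"
    by auto
  moreover have "ceiling ((2 ^ n + 3 * real n) / 6) = int G"
    using arg_cong[OF G(2), of real] by (intro ceiling_unique) (auto split: if_splits)
  ultimately show ?thesis using G(1) by simp
qed

end
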